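(* Let $\mathcal{A}=(\mathbb{G}_a^m,\Phi)$ be a $T$-module defined over a field $\mathcal{F}\subset\overline{k}$ such that there exists a positive integer $i$ for which the leading coefficient matrix of $\Phi(T^i)\in\mathcal{F}^{m,m}\{\tau\}$ is invertible. Then $\mathcal{A}$ is abelian.
   Context: $A=\mathbb{F}_q[T]$, $k=\mathbb{F}_q(T)$, $\tau$ the Frobenius $z\mapsto z^q$, and $\mathcal{F}^{m,m}\{\tau\}$ the twisted polynomial ring with $\tau M=M^{(q)}\tau$ (entrywise $q$-th power). A $T$-module of dimension $m$ over $\mathcal{F}$ is $\mathcal{A}=(\mathbb{G}_a^m,\Phi)$ with $\Phi:A\to\mathcal{F}^{m,m}\{\tau\}$ an $\mathbb{F}_q$-algebra homomorphism, $\Phi(T)=\sum_{i=0}^{\tilde d}a_i\tau^i$, $a_{\tilde d}\ne0$, $a_0=TI_m+N$ with $N$ nilpotent. $\mathrm{Hom}_{\mathcal{F}}(\mathcal{A},\mathbb{G}_a)$ denotes the $\mathbb{F}_q$-linear algebraic group homomorphisms $\mathbb{G}_a^m\to\mathbb{G}_a$ defined over $\mathcal{F}$, identified with $\mathcal{F}\{\tau\}^m$ (row vectors), made into an $\mathcal{F}[T]$-module by letting $\mathcal{F}$ act by left multiplication and $T\cdot f=f\circ\Phi(T)$. $\mathcal{A}$ is abelian if this $\mathcal{F}[T]$-module has finite rank. *)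

theory Defs
  imports "HOL-Computational_Algebra.Polynomial"
begin

(* Ambient field 'a plays the role of an algebraic closure of k = F_q(T);
   theta :: 'a is the image of T.  m x m matrices are functions
   nat => nat => 'a (only indices < m are relevant).  A twisted polynomial
   P in F^{m,m}{tau} is a function nat => nat => nat => 'a, P n r c being
   entry (r,c) of the coefficient of tau^n.  Row vectors in F{tau}^m are
   functions nat => nat => 'a, f n c being the coefficient of tau^n in
   component c. *)

definition Fq :: "nat \<Rightarrow> 'a::field set" where
  "Fq q = {x. x ^ q = x}"

definition is_subfield :: "'a::field set \<Rightarrow> bool" where
  "is_subfield F \<longleftrightarrow> 0 \<in> F \<and> 1 \<in> F \<and>
     (\<forall>x\<in>F. \<forall>y\<in>F. x + y \<in> F \<and> x * y \<in> F) \<and>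
     (\<forall>x\<in>F. - x \<in> F \<and> inverse x \<in> F)"

definition kfield :: "nat \<Rightarrow> 'a::field \<Rightarrow> 'a set" where
  "kfield q theta = {poly a theta / poly b theta | a b.
      (\<forall>i. coeff a i \<in> Fq q) \<and> (\<forall>i. coeff b i \<in> Fq q) \<and> poly b theta \<noteq> 0}"

definition algebraic_over :: "'a::field set \<Rightarrow> 'a \<Rightarrow> bool" where
  "algebraic_over K x \<longleftrightarrow> (\<exists>g. g \<noteq> 0 \<and> (\<forall>i. coeff g i \<in> K) \<and> poly g x = 0)"

definition good_setting :: "nat \<Rightarrow> 'a::field \<Rightarrow> bool" where
  "good_setting q theta \<longleftrightarrow> prime CHAR('a) \<and> (\<exists>e>0. q = CHAR('a) ^ e) \<and>
     finite (Fq q :: 'a set) \<and> card (Fq q :: 'a set) = q \<and>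
     (\<forall>g. g \<noteq> 0 \<and> (\<forall>i. coeff g i \<in> Fq q) \<longrightarrow> poly g theta \<noteq> 0)"

definition intermediate_field :: "nat \<Rightarrow> 'a::field \<Rightarrow> 'a set \<Rightarrow> bool" where
  "intermediate_field q theta F \<longleftrightarrow> is_subfield F \<and> kfield q theta \<subseteq> F \<and>
     (\<forall>x\<in>F. algebraic_over (kfield q theta) x)"

definition mat_mult :: "nat \<Rightarrow> (nat \<Rightarrow> nat \<Rightarrow> 'a::comm_ring_1) \<Rightarrow> (nat \<Rightarrow> nat \<Rightarrow> 'a) \<Rightarrow> nat \<Rightarrow> nat \<Rightarrow> 'a" where
  "mat_mult m A B = (\<lambda>r c. \<Sum>l<m. A r l * B l c)"

definition mat_id :: "nat \<Rightarrow> nat \<Rightarrow> nat \<Rightarrow> 'a::comm_ring_1" where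
  "mat_id m = (\<lambda>r c. if r = c \<and> r < m then 1 else 0)"

fun mat_pow :: "nat \<Rightarrow> (nat \<Rightarrow> nat \<Rightarrow> 'a::comm_ring_1) \<Rightarrow> nat \<Rightarrow> nat \<Rightarrow> nat \<Rightarrow> 'a" where
  "mat_pow m A 0 = mat_id m"
| "mat_pow m A (Suc k) = mat_mult m A (mat_pow m A k)"

definition mat_eq :: "nat \<Rightarrow> (nat \<Rightarrow> nat \<Rightarrow> 'a) \<Rightarrow> (nat \<Rightarrow> nat \<Rightarrow> 'a) \<Rightarrow> bool" where
  "mat_eq m A B \<longleftrightarrow> (\<forall>r<m. \<forall>c<m. A r c = B r c)"

definition mat_invertible :: "nat \<Rightarrow> (nat \<Rightarrow> nat \<Rightarrow> 'a::comm_ring_1) \<Rightarrow> bool" where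
  "mat_invertible m A \<longleftrightarrow> (\<exists>B. mat_eq m (mat_mult m A B) (mat_id m) \<and>
                                   mat_eq m (mat_mult m B A) (mat_id m))"

definition mat_nilpotent :: "nat \<Rightarrow> (nat \<Rightarrow> nat \<Rightarrow> 'a::comm_ring_1) \<Rightarrow> bool" where
  "mat_nilpotent m N \<longleftrightarrow> (\<exists>k. mat_eq m (mat_pow m N k) (\<lambda>_ _. 0))"

(* twisted matrix polynomials: tau M = M^(q) tau *)
definition tmul :: "nat \<Rightarrow> nat \<Rightarrow> (nat \<Rightarrow> nat \<Rightarrow> nat \<Rightarrow> 'a::comm_ring_1) \<Rightarrow> (nat \<Rightarrow> nat \<Rightarrow> nat \<Rightarrow> 'a) \<Rightarrow> nat \<Rightarrow> nat \<Rightarrow> nat \<Rightarrow> 'a" where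
  "tmul q m P Q = (\<lambda>n r c. \<Sum>j\<le>n. \<Sum>l<m. P j r l * (Q (n - j) l c) ^ (q ^ j))"

definition tone :: "nat \<Rightarrow> nat \<Rightarrow> nat \<Rightarrow> nat \<Rightarrow> 'a::comm_ring_1" where
  "tone m = (\<lambda>n r c. if n = 0 \<and> r = c \<and> r < m then 1 else 0)"

fun tpow :: "nat \<Rightarrow> nat \<Rightarrow> (nat \<Rightarrow> nat \<Rightarrow> nat \<Rightarrow> 'a::comm_ring_1) \<Rightarrow> nat \<Rightarrow> nat \<Rightarrow> nat \<Rightarrow> nat \<Rightarrow> 'a" where
  "tpow q m P 0 = tone m"
| "tpow q m P (Suc i) = tmul q m P (tpow q m P i)"

definition tdeg :: "nat \<Rightarrow> (nat \<Rightarrow> nat \<Rightarrow> nat \<Rightarrow> 'a::zero) \<Rightarrow> nat" where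
  "tdeg m P = (GREATEST n. \<exists>r<m. \<exists>c<m. P n r c \<noteq> 0)"

definition tlead :: "nat \<Rightarrow> (nat \<Rightarrow> nat \<Rightarrow> nat \<Rightarrow> 'a::zero) \<Rightarrow> nat \<Rightarrow> nat \<Rightarrow> 'a" where
  "tlead m P = P (tdeg m P)"

definition is_T_module :: "nat \<Rightarrow> 'a::field \<Rightarrow> 'a set \<Rightarrow> nat \<Rightarrow> (nat \<Rightarrow> nat \<Rightarrow> nat \<Rightarrow> 'a) \<Rightarrow> bool" where
  "is_T_module q theta F m Phi_T \<longleftrightarrow> m > 0 \<and>
     (\<forall>n r c. Phi_T n r c \<in> F) \<and>
     (\<forall>n r c. (r \<ge> m \<or> c \<ge> m) \<longrightarrow> Phi_T n r c = 0) \<and>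
     (\<exists>d. (\<forall>n>d. \<forall>r c. Phi_T n r c = 0) \<and> (\<exists>r<m. \<exists>c<m. Phi_T d r c \<noteq> 0)) \<and>
     mat_nilpotent m (\<lambda>r c. Phi_T 0 r c - theta * mat_id m r c)"

(* Hom_F(A, G_a) = F{tau}^m (row vectors) *)
definition Hom :: "'a::field set \<Rightarrow> nat \<Rightarrow> (nat \<Rightarrow> nat \<Rightarrow> 'a) set" where
  "Hom F m = {f. (\<forall>n c. f n c \<in> F) \<and> (\<forall>n c. c \<ge> m \<longrightarrow> f n c = 0) \<and>
                 (\<exists>D. \<forall>n>D. \<forall>c. f n c = 0)}"

definition tcomp :: "nat \<Rightarrow> nat \<Rightarrow> (nat \<Rightarrow> nat \<Rightarrow> 'a::comm_ring_1) \<Rightarrow> (nat \<Rightarrow> nat \<Rightarrow> nat \<Rightarrow> 'a) \<Rightarrow> nat \<Rightarrow> nat \<Rightarrow> 'a" where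
  "tcomp q m f M = (\<lambda>n c. \<Sum>j\<le>n. \<Sum>l<m. f j l * (M (n - j) l c) ^ (q ^ j))"

definition FT_act :: "nat \<Rightarrow> nat \<Rightarrow> (nat \<Rightarrow> nat \<Rightarrow> nat \<Rightarrow> 'a::field) \<Rightarrow> 'a poly \<Rightarrow> (nat \<Rightarrow> nat \<Rightarrow> 'a) \<Rightarrow> nat \<Rightarrow> nat \<Rightarrow> 'a" where
  "FT_act q m Phi_T a f = (\<lambda>n c. \<Sum>i\<le>degree a. coeff a i * tcomp q m f (tpow q m Phi_T i) n c)"

definition FT :: "'a::field set \<Rightarrow> 'a poly set" where
  "FT F = {a. \<forall>i. coeff a i \<in> F}"

(* the F[T]-module Hom_F(A,G_a) has finite rank, i.e. there is a finite subset S
   such that the quotient by the F[T]-span of S is torsion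
   (equivalently, dim over F(T) of Hom tensor F(T) is finite) *)
definition finite_rank :: "nat \<Rightarrow> 'a::field set \<Rightarrow> nat \<Rightarrow> (nat \<Rightarrow> nat \<Rightarrow> nat \<Rightarrow> 'a) \<Rightarrow> bool" where
  "finite_rank q F m Phi_T \<longleftrightarrow> (\<exists>S. finite S \<and> S \<subseteq> Hom F m \<and>
     (\<forall>f\<in>Hom F m. \<exists>a\<in>FT F. a \<noteq> 0 \<and> (\<exists>g. (\<forall>s\<in>S. g s \<in> FT F) \<and>
         FT_act q m Phi_T a f = (\<lambda>n c. \<Sum>s\<in>S. FT_act q m Phi_T (g s) s n c))))"

definition abelian :: "nat \<Rightarrow> 'a::field set \<Rightarrow> nat \<Rightarrow> (nat \<Rightarrow> nat \<Rightarrow> nat \<Rightarrow> 'a) \<Rightarrow> bool" where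
  "abelian q F m Phi_T \<longleftrightarrow> finite_rank q F m Phi_T"

end

theory Submission
  imports Defs "HOL-Computational_Algebra.Primes" "Jordan_Normal_Form.Determinant"
begin

(* Let L be the leading coefficient of Phi(T^i) and D its degree.  If L is invertible, one can
   divide by Phi(T^i) from the right in F{tau}^m as by a monic polynomial: if f has degree N >= D
   and top coefficient f_N, then f - f_N (L^-1)^(q^(N-D)) tau^(N-D) Phi(T^i) has degree < N,
   because tau^(N-D) L = L^(q^(N-D)) tau^(N-D).  Hence the finitely many vectors tau^n e_c with
   n < D span Hom_F(A, G_a) over F[T^i], a fortiori over F[T].
   If D = 0, then Phi(T^(i t)) is the constant matrix A^(i t) with A = theta I + N, so a polynomial
   in T^i acts on the coefficient of tau^n of f through A^(q^n).  There T - theta^(q^n), which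
   divides T^i - theta^(i q^n), acts as the nilpotent matrix N^(q^n); so a product of powers of
   the T^i - theta^(i q^n) kills f, and Hom_F(A, G_a) is torsion. *)

section \<open>Frobenius and twisted matrix polynomials\<close>

definition char_power :: "'a::comm_semiring_1 itself \<Rightarrow> nat \<Rightarrow> bool" where
  "char_power _ q \<longleftrightarrow> prime CHAR('a) \<and> (\<exists>e. q = CHAR('a) ^ e)"

lemma char_power_pos: "char_power TYPE('a::comm_semiring_1) q \<Longrightarrow> q > 0"
  unfolding char_power_def by (auto intro: prime_gt_0_nat)

lemma frobenius_add:
  assumes "char_power TYPE('a::comm_semiring_1) q"
  shows "(x + y :: 'a) ^ q ^ j = x ^ q ^ j + y ^ q ^ j"
proof -
  obtain e where "prime CHAR('a)" "q = CHAR('a) ^ e"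
    using assms unfolding char_power_def by blast
  then show ?thesis by (intro freshmans_dream'[where n = "e * j"]) (simp_all add: power_mult)
qed

lemma frobenius_sum:
  assumes "char_power TYPE('a::comm_semiring_1) q"
  shows "(sum f A :: 'a) ^ q ^ j = (\<Sum>x\<in>A. f x ^ q ^ j)"
proof -
  obtain e where "prime CHAR('a)" "q = CHAR('a) ^ e"
    using assms unfolding char_power_def by blast
  then show ?thesis by (intro freshmans_dream_sum'[where n = "e * j"]) (simp_all add: power_mult)
qed

lemma sum_atMost_triangle:
  fixes G :: "nat \<Rightarrow> nat \<Rightarrow> 'b::comm_monoid_add"
  shows "(\<Sum>j\<le>n. \<Sum>a\<le>j. G a (j - a)) = (\<Sum>a\<le>n. \<Sum>b\<le>n - a. G a b)"
proof -
  have "(\<Sum>a\<le>n. \<Sum>b\<le>n - a. G a b) = (\<Sum>(a, b)\<in>(SIGMA a:{..n}. {..n - a}). G a b)"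
    by (rule sum.Sigma) auto
  also have "(SIGMA a:{..n}. {..n - a}) = {(a, b). a + b \<le> n}" by auto
  also have "(\<Sum>(a, b)\<in>{(a, b). a + b \<le> n}. G a b) = (\<Sum>j\<le>n. \<Sum>a\<le>j. G a (j - a))"
    by (rule sum.triangle_reindex_eq)
  finally show ?thesis by simp
qed

(* Associativity rests on tau^a (Q tau^b) = Q^(q^a) tau^(a+b) and additivity of x \<mapsto> x^(q^a). *)
lemma tmul_assoc:
  fixes P Q R :: "nat \<Rightarrow> nat \<Rightarrow> nat \<Rightarrow> 'a::comm_ring_1"
  assumes q: "char_power TYPE('a) q"
  shows "tmul q m (tmul q m P Q) R = tmul q m P (tmul q m Q R)"
proof (intro ext)
  fix n r c
  define G where "G = (\<lambda>a b. \<Sum>k<m. \<Sum>l<m.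
    P a r k * Q b k l ^ q ^ a * R (n - (a + b)) l c ^ q ^ (a + b))"
  have inner: "(\<Sum>l<m. (\<Sum>a\<le>j. \<Sum>k<m. P a r k * Q (j - a) k l ^ q ^ a) * R (n - j) l c ^ q ^ j)
      = (\<Sum>a\<le>j. G a (j - a))" if "j \<le> n" for j
  proof -
    have "(\<Sum>l<m. (\<Sum>a\<le>j. \<Sum>k<m. P a r k * Q (j - a) k l ^ q ^ a) * R (n - j) l c ^ q ^ j)
        = (\<Sum>l<m. \<Sum>a\<le>j. \<Sum>k<m. P a r k * Q (j - a) k l ^ q ^ a * R (n - j) l c ^ q ^ j)"
      by (simp only: sum_distrib_right)
    also have "\<dots> = (\<Sum>a\<le>j. \<Sum>k<m. \<Sum>l<m. P a r k * Q (j - a) k l ^ q ^ a * R (n - j) l c ^ q ^ j)"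
      by (subst sum.swap) (intro sum.cong refl sum.swap)
    also have "\<dots> = (\<Sum>a\<le>j. G a (j - a))"
      unfolding G_def using that by (intro sum.cong refl) auto
    finally show ?thesis .
  qed
  have outer: "(\<Sum>b\<le>n - a. G a b)
      = (\<Sum>l<m. P a r l * (\<Sum>j\<le>n - a. \<Sum>k<m. Q j l k * R (n - a - j) k c ^ q ^ j) ^ q ^ a)" for a
  proof -
    have "(\<Sum>b\<le>n - a. G a b) = (\<Sum>b\<le>n - a. \<Sum>k<m. \<Sum>l<m.
        P a r k * (Q b k l * R (n - a - b) l c ^ q ^ b) ^ q ^ a)"
      unfolding G_def
      by (intro sum.cong refl) (simp add: power_mult_distrib power_add power_mult add.commute mult.assoc)
    also have "\<dots> = (\<Sum>k<m. \<Sum>b\<le>n - a. \<Sum>l<m. P a r k * (Q b k l * R (n - a - b) l c ^ q ^ b) ^ q ^ a)"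
      by (rule sum.swap)
    also have "\<dots> = (\<Sum>k<m. P a r k * (\<Sum>b\<le>n - a. \<Sum>l<m. Q b k l * R (n - a - b) l c ^ q ^ b) ^ q ^ a)"
      by (simp add: frobenius_sum[OF q] sum_distrib_left)
    finally show ?thesis .
  qed
  have "tmul q m (tmul q m P Q) R n r c = (\<Sum>j\<le>n. \<Sum>a\<le>j. G a (j - a))"
    unfolding tmul_def by (intro sum.cong refl inner) simp
  also have "\<dots> = (\<Sum>a\<le>n. \<Sum>b\<le>n - a. G a b)" by (rule sum_atMost_triangle)
  also have "\<dots> = tmul q m P (tmul q m Q R) n r c"
    unfolding tmul_def outer ..
  finally show "tmul q m (tmul q m P Q) R n r c = tmul q m P (tmul q m Q R) n r c" .
qed

lemma tcomp_eq_tmul: "tcomp q m f M n c = tmul q m (\<lambda>j r l. f j l) M n r c"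
  unfolding tcomp_def tmul_def by simp

lemma tcomp_tcomp:
  fixes f :: "nat \<Rightarrow> nat \<Rightarrow> 'a::comm_ring_1"
  assumes "char_power TYPE('a) q"
  shows "tcomp q m (tcomp q m f A) B = tcomp q m f (tmul q m A B)"
proof (intro ext)
  fix n c
  have row: "(\<lambda>j r l. tcomp q m f A j l) = tmul q m (\<lambda>j r l. f j l) A"
    by (intro ext) (rule tcomp_eq_tmul)
  have "tcomp q m (tcomp q m f A) B n c = tmul q m (\<lambda>j r l. tcomp q m f A j l) B n 0 c"
    by (rule tcomp_eq_tmul)
  also have "\<dots> = tmul q m (\<lambda>j r l. f j l) (tmul q m A B) n 0 c"
    unfolding row tmul_assoc[OF assms] ..
  also have "\<dots> = tcomp q m f (tmul q m A B) n c"
    by (rule tcomp_eq_tmul[symmetric])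
  finally show "tcomp q m (tcomp q m f A) B n c = tcomp q m f (tmul q m A B) n c" .
qed

lemma tmul_tone_left:
  fixes Q :: "nat \<Rightarrow> nat \<Rightarrow> nat \<Rightarrow> 'a::comm_ring_1"
  assumes "\<And>n r c. r \<ge> m \<Longrightarrow> Q n r c = 0"
  shows "tmul q m (tone m) Q = Q"
proof (intro ext)
  fix n r c
  have "tmul q m (tone m) Q n r c
      = (\<Sum>j\<le>n. \<Sum>l<m. if j = 0 \<and> r = l \<and> r < m then Q (n - j) l c ^ q ^ j else 0)"
    unfolding tmul_def tone_def by (intro sum.cong refl) auto
  also have "\<dots> = (\<Sum>j\<le>n. if j = 0 then (if r < m then Q n r c else 0) else 0)"
    by (intro sum.cong refl) (auto simp: sum.delta)
  also have "\<dots> = Q n r c" using assms by (auto simp: sum.delta)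
  finally show "tmul q m (tone m) Q n r c = Q n r c" .
qed

lemma tcomp_tone:
  fixes f :: "nat \<Rightarrow> nat \<Rightarrow> 'a::comm_ring_1"
  assumes "\<And>n c. c \<ge> m \<Longrightarrow> f n c = 0" and "q > 0"
  shows "tcomp q m f (tone m) = f"
proof (intro ext)
  fix n c
  have "tcomp q m f (tone m) n c = (\<Sum>j\<le>n. \<Sum>l<m. if j = n \<and> l = c \<and> c < m then f j l else 0)"
    unfolding tcomp_def tone_def using \<open>q > 0\<close> by (intro sum.cong refl) (auto simp: zero_power)
  also have "\<dots> = (\<Sum>j\<le>n. if j = n then (if c < m then f n c else 0) else 0)"
    by (intro sum.cong refl) (auto simp: sum.delta)
  also have "\<dots> = f n c" using assms by (auto simp: sum.delta)
  finally show "tcomp q m f (tone m) n c = f n c" .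
qed

lemma tcomp_smult: "tcomp q m (\<lambda>n c. x * f n c) M = (\<lambda>n c. x * tcomp q m f M n c)"
  unfolding tcomp_def by (intro ext) (simp add: sum_distrib_left mult.assoc)

lemma tcomp_sum: "tcomp q m (\<lambda>n c. \<Sum>s\<in>S. f s n c) M = (\<lambda>n c. \<Sum>s\<in>S. tcomp q m (f s) M n c)"
  unfolding tcomp_def by (intro ext) (simp add: sum_distrib_right sum.swap[where B = S])

lemma tmul_eq_0_above_degree:
  fixes P Q :: "nat \<Rightarrow> nat \<Rightarrow> nat \<Rightarrow> 'a::comm_ring_1"
  assumes "\<And>n r c. n > a \<Longrightarrow> P n r c = 0" "\<And>n r c. n > b \<Longrightarrow> Q n r c = 0"
    and "q > 0" "n > a + b"
  shows "tmul q m P Q n r c = 0"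
  unfolding tmul_def
proof (rule sum.neutral, rule ballI)
  fix j assume "j \<in> {..n}"
  show "(\<Sum>l<m. P j r l * Q (n - j) l c ^ q ^ j) = 0"
  proof (cases "j > a")
    case False
    then have "n - j > b" using assms(4) by auto
    then show ?thesis using assms by (simp add: zero_power)
  qed (use assms in simp)
qed

lemma tmul_eq_0_outside:
  fixes P Q :: "nat \<Rightarrow> nat \<Rightarrow> nat \<Rightarrow> 'a::comm_ring_1"
  assumes "\<And>n r c. r \<ge> m \<or> c \<ge> m \<Longrightarrow> P n r c = 0" "\<And>n r c. r \<ge> m \<or> c \<ge> m \<Longrightarrow> Q n r c = 0"
    and "q > 0" "r \<ge> m \<or> c \<ge> m"
  shows "tmul q m P Q n r c = 0"
  unfolding tmul_def using assms by (intro sum.neutral ballI) (auto simp: zero_power)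

section \<open>Subfields\<close>

locale field_subset =
  fixes F :: "'a::field set"
  assumes subfield: "is_subfield F"
begin

lemma F_zero: "0 \<in> F" and F_one: "1 \<in> F"
  and F_add: "x \<in> F \<Longrightarrow> y \<in> F \<Longrightarrow> x + y \<in> F"
  and F_mult: "x \<in> F \<Longrightarrow> y \<in> F \<Longrightarrow> x * y \<in> F"
  and F_uminus: "x \<in> F \<Longrightarrow> - x \<in> F"
  and F_inverse: "x \<in> F \<Longrightarrow> inverse x \<in> F"
  using subfield unfolding is_subfield_def by blast+

lemma F_diff: "x \<in> F \<Longrightarrow> y \<in> F \<Longrightarrow> x - y \<in> F"
  using F_add[OF _ F_uminus, of x y] by simp

lemma F_divide: "x \<in> F \<Longrightarrow> y \<in> F \<Longrightarrow> x / y \<in> F"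
  using F_mult[OF _ F_inverse, of x y] by (simp add: divide_inverse)

lemma F_power: "x \<in> F \<Longrightarrow> x ^ k \<in> F"
  by (induct k) (simp_all add: F_one F_mult)

lemma F_sum: "(\<And>x. x \<in> A \<Longrightarrow> f x \<in> F) \<Longrightarrow> sum f A \<in> F"
  by (induct A rule: infinite_finite_induct) (simp_all add: F_zero F_add)

lemma F_prod: "(\<And>x. x \<in> A \<Longrightarrow> f x \<in> F) \<Longrightarrow> prod f A \<in> F"
  by (induct A rule: infinite_finite_induct) (simp_all add: F_one F_mult)

lemma F_det:
  assumes "\<And>r c. r < dim_row M \<Longrightarrow> c < dim_col M \<Longrightarrow> M $$ (r, c) \<in> F"
  shows "det M \<in> F"
proof (cases "dim_row M = dim_col M")
  case True
  have sign: "(of_int (sign p) :: 'a) \<in> F" for p :: "nat \<Rightarrow> nat"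
    by (cases p rule: sign_cases) (simp_all add: F_one F_uminus)
  have "M $$ (i, p i) \<in> F" if "p permutes {0..<dim_row M}" "i \<in> {0..<dim_row M}" for p i
    using assms True that permutes_in_image[OF that(1)] by auto
  then show ?thesis
    unfolding det_def using True by (auto intro!: F_sum F_mult sign F_prod)
qed (simp add: det_def F_zero)

(* Cramer's rule: the inverse is adj(L) / det L, whose entries are polynomials in those of L. *)
lemma F_left_inverse:
  assumes "mat_invertible m L" and L_in_F: "\<And>r c. L r c \<in> F"
  obtains Linv where "\<And>r c. Linv r c \<in> F"
    and "\<And>k c. k < m \<Longrightarrow> c < m \<Longrightarrow> (\<Sum>l<m. Linv k l * L l c) = (if k = c then 1 else 0)"
proof -
  obtain B where B: "mat_eq m (mat_mult m L B) (mat_id m)"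
    using assms(1) unfolding mat_invertible_def by blast
  define LM where "LM = mat m m (\<lambda>(r, c). L r c)"
  define BM where "BM = mat m m (\<lambda>(r, c). B r c)"
  have LM: "LM \<in> carrier_mat m m" and BM: "BM \<in> carrier_mat m m"
    unfolding LM_def BM_def by auto
  have "LM * BM = 1\<^sub>m m"
    using B unfolding LM_def BM_def mat_eq_def mat_mult_def mat_id_def
    by (intro eq_matI) (auto simp: scalar_prod_def atLeast0LessThan)
  then have "det LM * det BM = 1" using det_mult[OF LM BM] by simp
  then have det_nz: "det LM \<noteq> 0" by auto
  have det_F: "det LM \<in> F" by (rule F_det) (simp add: LM_def L_in_F)
  have adj_F: "adj_mat LM $$ (r, c) \<in> F" if "r < m" "c < m" for r c
  proof -
    have "adj_mat LM $$ (r, c) = cofactor LM c r" using that LM unfolding adj_mat_def by auto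
    also have "\<dots> \<in> F" unfolding cofactor_def
      by (intro F_mult F_power F_one F_uminus F_det) (use LM in \<open>auto simp: mat_delete_def LM_def L_in_F\<close>)
    finally show ?thesis .
  qed
  define Linv where "Linv = (\<lambda>r c. if r < m \<and> c < m then adj_mat LM $$ (r, c) / det LM else 0)"
  show ?thesis
  proof
    show "Linv r c \<in> F" for r c unfolding Linv_def using adj_F det_F F_zero by (auto intro: F_divide)
  next
    fix k c assume kc: "k < m" "c < m"
    have "(\<Sum>l<m. adj_mat LM $$ (k, l) * L l c) = (adj_mat LM * LM) $$ (k, c)"
      using kc LM adj_mat(1)[OF LM] unfolding LM_def by (simp add: scalar_prod_def atLeast0LessThan)
    also have "\<dots> = (if k = c then det LM else 0)"
      using adj_mat(3)[OF LM] kc by simp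
    finally have "(\<Sum>l<m. adj_mat LM $$ (k, l) * L l c) / det LM = (if k = c then 1 else 0)"
      using det_nz by simp
    then show "(\<Sum>l<m. Linv k l * L l c) = (if k = c then 1 else 0)"
      unfolding Linv_def using kc by (simp add: sum_divide_distrib)
  qed
qed

lemma FT_add: "a \<in> FT F \<Longrightarrow> b \<in> FT F \<Longrightarrow> a + b \<in> FT F"
  unfolding FT_def by (auto intro: F_add)

lemma FT_mult: "a \<in> FT F \<Longrightarrow> b \<in> FT F \<Longrightarrow> a * b \<in> FT F"
  unfolding FT_def by (auto simp: coeff_mult intro!: F_sum F_mult)

lemma FT_const: "x \<in> F \<Longrightarrow> [:x:] \<in> FT F"
  unfolding FT_def by (auto simp: coeff_pCons split: nat.splits intro: F_zero)

lemma FT_one: "1 \<in> FT F"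
  using FT_const[OF F_one] by (simp add: one_pCons)

lemma FT_monom_mult: "a \<in> FT F \<Longrightarrow> monom 1 i * a \<in> FT F"
  unfolding FT_def by (auto simp: coeff_monom_mult intro: F_zero)

lemma FT_power: "a \<in> FT F \<Longrightarrow> a ^ k \<in> FT F"
  by (induct k) (auto intro: FT_one FT_mult)

lemma FT_prod: "(\<And>x. x \<in> S \<Longrightarrow> f x \<in> FT F) \<Longrightarrow> prod f S \<in> FT F"
  by (induct S rule: infinite_finite_induct) (auto intro: FT_one FT_mult)

lemma FT_monom_minus_const: "x \<in> F \<Longrightarrow> monom 1 i - [:x:] \<in> FT F"
  unfolding FT_def
  by (auto simp: coeff_monom coeff_pCons split: nat.splits intro: F_zero F_one F_diff F_uminus)

end

section \<open>T-modules\<close>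

definition unit_vec :: "nat \<times> nat \<Rightarrow> nat \<Rightarrow> nat \<Rightarrow> 'a::zero_neq_one" where
  "unit_vec p = (\<lambda>n c. if n = fst p \<and> c = snd p then 1 else 0)"

lemma inj_unit_vec: "inj unit_vec"
proof (rule injI)
  fix p p' :: "nat \<times> nat"
  assume "unit_vec p = (unit_vec p' :: nat \<Rightarrow> nat \<Rightarrow> 'a)"
  then have "(unit_vec p :: nat \<Rightarrow> nat \<Rightarrow> 'a) (fst p) (snd p) = unit_vec p' (fst p) (snd p)" by simp
  then show "p = p'" by (auto simp: unit_vec_def prod_eq_iff split: if_splits)
qed

lemma sum_lessThan_add_shift:
  "(\<Sum>k<(K::nat) + i. G k) = (\<Sum>k<i. G k) + (\<Sum>k<K. (G (k + i) :: 'a::comm_monoid_add))"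
  by (induct K) (auto simp: add_ac)

locale T_module = field_subset F
  for F :: "'a::field set" +
  fixes q m d :: nat and theta :: 'a and Phi :: "nat \<Rightarrow> nat \<Rightarrow> nat \<Rightarrow> 'a"
  assumes char_power: "char_power TYPE('a) q"
    and theta_in_F: "theta \<in> F"
    and Phi_in_F: "\<And>n r c. Phi n r c \<in> F"
    and Phi_outside: "\<And>n r c. r \<ge> m \<or> c \<ge> m \<Longrightarrow> Phi n r c = 0"
    and Phi_above_degree: "\<And>n r c. n > d \<Longrightarrow> Phi n r c = 0"
    and nilpotent: "mat_nilpotent m (\<lambda>r c. Phi 0 r c - theta * mat_id m r c)"
begin

abbreviation Phi_pow :: "nat \<Rightarrow> nat \<Rightarrow> nat \<Rightarrow> nat \<Rightarrow> 'a" where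
  "Phi_pow \<equiv> tpow q m Phi"

lemma q_pos: "q > 0"
  using char_power by (rule char_power_pos)

lemma Phi_pow_outside: "r \<ge> m \<or> c \<ge> m \<Longrightarrow> Phi_pow k n r c = 0"
  by (induct k arbitrary: n r c) (auto simp: tone_def intro: tmul_eq_0_outside Phi_outside q_pos)

lemma Phi_pow_above_degree: "n > k * d \<Longrightarrow> Phi_pow k n r c = 0"
proof (induct k arbitrary: n r c)
  case (Suc k)
  then show ?case
    by (simp, intro tmul_eq_0_above_degree[where a = d and b = "k * d"] Phi_above_degree q_pos) auto
qed (simp add: tone_def)

lemma Phi_pow_in_F: "Phi_pow k n r c \<in> F"
  by (induct k arbitrary: n r c)
     (auto simp: tone_def tmul_def F_zero F_one intro!: F_sum F_mult F_power Phi_in_F)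

lemma Phi_pow_add: "Phi_pow (a + b) = tmul q m (Phi_pow a) (Phi_pow b)"
proof (induct a)
  case 0
  show ?case by (simp add: tmul_tone_left Phi_pow_outside)
next
  case (Suc a)
  then show ?case by (simp add: tmul_assoc[OF char_power])
qed

lemma Phi_pow_above_tdeg:
  assumes "n > tdeg m (Phi_pow k)"
  shows "Phi_pow k n r c = 0"
proof (rule ccontr)
  assume nz: "Phi_pow k n r c \<noteq> 0"
  then have "\<exists>r<m. \<exists>c<m. Phi_pow k n r c \<noteq> 0" using Phi_pow_outside by (meson not_le)
  moreover have "y \<le> k * d" if "\<exists>r<m. \<exists>c<m. Phi_pow k y r c \<noteq> 0" for y
    using that Phi_pow_above_degree by (meson not_le)
  ultimately have "n \<le> tdeg m (Phi_pow k)"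
    unfolding tdeg_def by (rule Greatest_le_nat)
  then show False using assms by simp
qed

lemma tcomp_in_Hom:
  assumes f: "f \<in> Hom F m" and M_in_F: "\<And>n r c. M n r c \<in> F"
    and M_outside: "\<And>n r c. r \<ge> m \<or> c \<ge> m \<Longrightarrow> M n r c = 0"
    and M_above: "\<And>n r c. n > DM \<Longrightarrow> M n r c = 0"
  shows "tcomp q m f M \<in> Hom F m"
proof -
  obtain Df where Df: "\<And>n c. n > Df \<Longrightarrow> f n c = 0" and f_in_F: "\<And>n c. f n c \<in> F"
    using f unfolding Hom_def by blast
  have "tcomp q m f M n c = 0" if "n > Df + DM" for n c
    unfolding tcomp_def
  proof (rule sum.neutral, rule ballI)
    fix j assume "j \<in> {..n}"
    show "(\<Sum>l<m. f j l * M (n - j) l c ^ q ^ j) = 0"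
    proof (cases "j > Df")
      case False
      then have "n - j > DM" using that by auto
      then show ?thesis using M_above q_pos by (simp add: zero_power)
    qed (simp add: Df)
  qed
  moreover have "tcomp q m f M n c = 0" if "c \<ge> m" for n c
    unfolding tcomp_def using that M_outside q_pos by (simp add: zero_power)
  moreover have "tcomp q m f M n c \<in> F" for n c
    unfolding tcomp_def by (intro F_sum F_mult f_in_F F_power M_in_F)
  ultimately show ?thesis unfolding Hom_def by blast
qed

lemma tcomp_Phi_pow_in_Hom: "f \<in> Hom F m \<Longrightarrow> tcomp q m f (Phi_pow k) \<in> Hom F m"
  by (rule tcomp_in_Hom[where DM = "k * d"]) (auto intro: Phi_pow_in_F Phi_pow_outside Phi_pow_above_degree)

lemma Hom_diff:
  assumes "f \<in> Hom F m" "g \<in> Hom F m"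
  shows "(\<lambda>n c. f n c - g n c) \<in> Hom F m"
proof -
  obtain D1 D2 where "\<forall>n > D1. \<forall>c. f n c = 0" "\<forall>n > D2. \<forall>c. g n c = 0"
    using assms unfolding Hom_def by blast
  then have "\<forall>n > max D1 D2. \<forall>c. f n c - g n c = 0" by simp
  moreover have "\<forall>n c. f n c - g n c \<in> F" "\<forall>n c. c \<ge> m \<longrightarrow> f n c - g n c = 0"
    using assms unfolding Hom_def by (auto intro: F_diff)
  ultimately show ?thesis unfolding Hom_def by blast
qed

lemma FT_act_eq_sum_lessThan:
  assumes "degree a < K"
  shows "FT_act q m Phi a f n c = (\<Sum>k<K. coeff a k * tcomp q m f (Phi_pow k) n c)"
  unfolding FT_act_def using assms by (intro sum.mono_neutral_left) (auto simp: coeff_eq_0)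

lemma FT_act_add:
  "FT_act q m Phi (a + b) f = (\<lambda>n c. FT_act q m Phi a f n c + FT_act q m Phi b f n c)"
proof (intro ext)
  fix n c
  define K where "K = Suc (max (degree a) (degree b))"
  have "degree (a + b) < K" unfolding K_def using degree_add_le_max[of a b] by auto
  then show "FT_act q m Phi (a + b) f n c = FT_act q m Phi a f n c + FT_act q m Phi b f n c"
    by (simp add: FT_act_eq_sum_lessThan[where K = K] K_def sum.distrib distrib_right)
qed

lemma FT_act_const:
  assumes "\<And>n c. c \<ge> m \<Longrightarrow> f n c = 0"
  shows "FT_act q m Phi [:x:] f = (\<lambda>n c. x * f n c)"
  by (intro ext) (simp add: FT_act_def tcomp_tone[OF assms q_pos])

lemma FT_act_monom_mult:
  "tcomp q m (FT_act q m Phi a f) (Phi_pow i) = FT_act q m Phi (monom 1 i * a) f"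
proof (intro ext)
  fix n c
  define K where "K = Suc (degree a)"
  have K: "degree a < K" unfolding K_def by simp
  have "degree (monom 1 i * a) < K + i"
    using degree_mult_le[of "monom 1 i" a] degree_monom_le[of "1::'a" i] K by linarith
  then have "FT_act q m Phi (monom 1 i * a) f n c
      = (\<Sum>k<K + i. coeff (monom 1 i * a) k * tcomp q m f (Phi_pow k) n c)"
    by (rule FT_act_eq_sum_lessThan)
  also have "\<dots> = (\<Sum>k<K. coeff a k * tcomp q m f (Phi_pow (k + i)) n c)"
    by (simp add: sum_lessThan_add_shift coeff_monom_mult)
  also have "\<dots> = (\<Sum>k<K. coeff a k * tcomp q m (tcomp q m f (Phi_pow k)) (Phi_pow i) n c)"
    by (simp add: tcomp_tcomp[OF char_power] Phi_pow_add)
  also have "\<dots> = tcomp q m (FT_act q m Phi a f) (Phi_pow i) n c"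
    by (simp add: FT_act_eq_sum_lessThan[OF K, abs_def] tcomp_sum tcomp_smult)
  finally show "tcomp q m (FT_act q m Phi a f) (Phi_pow i) n c = FT_act q m Phi (monom 1 i * a) f n c" ..
qed

definition FT_span :: "(nat \<Rightarrow> nat \<Rightarrow> 'a) set \<Rightarrow> (nat \<Rightarrow> nat \<Rightarrow> 'a) set" where
  "FT_span S = {f. \<exists>g. (\<forall>s\<in>S. g s \<in> FT F) \<and> f = (\<lambda>n c. \<Sum>s\<in>S. FT_act q m Phi (g s) s n c)}"

lemma FT_span_add:
  assumes "f \<in> FT_span S" "h \<in> FT_span S"
  shows "(\<lambda>n c. f n c + h n c) \<in> FT_span S"
proof -
  obtain g1 g2 where "\<forall>s\<in>S. g1 s \<in> FT F" "f = (\<lambda>n c. \<Sum>s\<in>S. FT_act q m Phi (g1 s) s n c)"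
    and "\<forall>s\<in>S. g2 s \<in> FT F" "h = (\<lambda>n c. \<Sum>s\<in>S. FT_act q m Phi (g2 s) s n c)"
    using assms unfolding FT_span_def by blast
  then show ?thesis unfolding FT_span_def
    by (intro CollectI exI[of _ "\<lambda>s. g1 s + g2 s"]) (auto intro: FT_add simp: FT_act_add sum.distrib)
qed

lemma FT_span_tcomp_Phi_pow:
  assumes "f \<in> FT_span S"
  shows "tcomp q m f (Phi_pow i) \<in> FT_span S"
proof -
  obtain g where "\<forall>s\<in>S. g s \<in> FT F" "f = (\<lambda>n c. \<Sum>s\<in>S. FT_act q m Phi (g s) s n c)"
    using assms unfolding FT_span_def by blast
  then show ?thesis unfolding FT_span_def
    by (intro CollectI exI[of _ "\<lambda>s. monom 1 i * g s"])
       (auto intro: FT_monom_mult simp: tcomp_sum FT_act_monom_mult)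
qed

lemma unit_vec_in_Hom: "p \<in> {..<D} \<times> {..<m} \<Longrightarrow> unit_vec p \<in> Hom F m"
  unfolding Hom_def unit_vec_def using F_zero F_one by (auto intro!: exI[of _ "fst p"])

lemma Hom_low_degree_in_FT_span:
  assumes f: "f \<in> Hom F m" and low: "\<And>n c. n \<ge> D \<Longrightarrow> f n c = 0"
  shows "f \<in> FT_span (unit_vec ` ({..<D} \<times> {..<m}))"
proof -
  let ?I = "{..<D} \<times> {..<m}"
  have inj: "inj_on (unit_vec :: _ \<Rightarrow> nat \<Rightarrow> nat \<Rightarrow> 'a) ?I" using inj_unit_vec by (rule inj_on_subset) simp
  define g where "g (s :: nat \<Rightarrow> nat \<Rightarrow> 'a) = [:f (fst (the_inv_into ?I unit_vec s)) (snd (the_inv_into ?I unit_vec s)):]" for s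
  have g_unit_vec: "g (unit_vec p) = [:f (fst p) (snd p):]" if "p \<in> ?I" for p
    unfolding g_def using the_inv_into_f_f[OF inj that] by simp
  have act_g: "FT_act q m Phi (g (unit_vec p)) (unit_vec p) n c = (if p = (n, c) then f n c else 0)"
    if "p \<in> ?I" for p n c
  proof -
    have "FT_act q m Phi (g (unit_vec p)) (unit_vec p) = (\<lambda>n c. f (fst p) (snd p) * unit_vec p n c)"
      unfolding g_unit_vec[OF that] by (rule FT_act_const) (use that in \<open>auto simp: unit_vec_def\<close>)
    then show ?thesis by (auto simp: unit_vec_def)
  qed
  have "f n c = (\<Sum>s\<in>unit_vec ` ?I. FT_act q m Phi (g s) s n c)" for n c
    using low f by (auto simp: sum.reindex[OF inj] act_g sum.delta Hom_def)
  moreover have "g s \<in> FT F" if "s \<in> unit_vec ` ?I" for s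
    using that f by (auto simp: g_unit_vec Hom_def intro!: FT_const)
  ultimately show ?thesis unfolding FT_span_def by blast
qed

lemma finite_rank_if_Hom_subset_FT_span:
  assumes "finite S" "S \<subseteq> Hom F m" "Hom F m \<subseteq> FT_span S"
  shows "finite_rank q F m Phi"
  unfolding finite_rank_def
proof (intro exI[of _ S] conjI ballI assms(1,2))
  fix f assume f: "f \<in> Hom F m"
  then have act_one: "FT_act q m Phi 1 f = f"
    using FT_act_const[of f 1] by (simp add: one_pCons Hom_def)
  obtain g where g: "\<forall>s\<in>S. g s \<in> FT F" "f = (\<lambda>n c. \<Sum>s\<in>S. FT_act q m Phi (g s) s n c)"
    using f assms(3) unfolding FT_span_def by blast
  show "\<exists>a\<in>FT F. a \<noteq> 0 \<and> (\<exists>g. (\<forall>s\<in>S. g s \<in> FT F) \<and>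
      FT_act q m Phi a f = (\<lambda>n c. \<Sum>s\<in>S. FT_act q m Phi (g s) s n c))"
    by (intro bexI[of _ 1] conjI exI[of _ g] FT_one) (use g act_one in auto)
qed

lemma finite_rank_if_torsion:
  assumes "\<And>f. f \<in> Hom F m \<Longrightarrow> \<exists>a\<in>FT F. a \<noteq> 0 \<and> FT_act q m Phi a f = (\<lambda>n c. 0)"
  shows "finite_rank q F m Phi"
  unfolding finite_rank_def using assms by (intro exI[of _ "{}"]) auto

end

section \<open>Division by a power of Phi(T) with invertible leading coefficient\<close>

locale invertible_leading_coeff = T_module +
  fixes i D :: nat and Linv :: "nat \<Rightarrow> nat \<Rightarrow> 'a"
  assumes D_pos: "D > 0"
    and Phi_pow_i_above: "\<And>n r c. n > D \<Longrightarrow> Phi_pow i n r c = 0"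
    and Linv_in_F: "\<And>r c. Linv r c \<in> F"
    and Linv_left_inverse: "\<And>k c. k < m \<Longrightarrow> c < m \<Longrightarrow>
      (\<Sum>l<m. Linv k l * Phi_pow i D l c) = (if k = c then 1 else 0)"
begin

lemma division_step:
  assumes f: "f \<in> Hom F m" and "D \<le> N" and f_above: "\<And>n c. n > N \<Longrightarrow> f n c = 0"
  obtains h where "h \<in> Hom F m" "\<And>n c. n > N - D \<Longrightarrow> h n c = 0"
    "\<And>n c. n \<ge> N \<Longrightarrow> f n c = tcomp q m h (Phi_pow i) n c"
proof
  define Q where "Q = q ^ (N - D)"
  define w where "w l = (\<Sum>k<m. f N k * Linv k l ^ Q)" for l
  define h where "h n c = (if n = N - D \<and> c < m then w c else 0)" for n c
  have f_in_F: "\<And>n c. f n c \<in> F" and f_outside: "\<And>n c. c \<ge> m \<Longrightarrow> f n c = 0"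
    using f unfolding Hom_def by auto
  have "w l \<in> F" for l unfolding w_def by (intro F_sum F_mult f_in_F F_power Linv_in_F)
  then show "h \<in> Hom F m"
    unfolding Hom_def h_def using F_zero by (auto intro!: exI[of _ "N - D"])
  show "\<And>n c. n > N - D \<Longrightarrow> h n c = 0" unfolding h_def by auto
  fix n c assume "n \<ge> N"
  have "tcomp q m h (Phi_pow i) n c
      = (\<Sum>j\<le>n. if j = N - D then (\<Sum>l<m. w l * Phi_pow i (n - j) l c ^ q ^ j) else 0)"
    unfolding tcomp_def h_def by (intro sum.cong refl) auto
  also have "\<dots> = (\<Sum>l<m. w l * Phi_pow i (n - (N - D)) l c ^ Q)"
    using \<open>n \<ge> N\<close> by (simp add: sum.delta Q_def)
  finally have tc: "tcomp q m h (Phi_pow i) n c = (\<Sum>l<m. w l * Phi_pow i (n - (N - D)) l c ^ Q)" .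
  show "f n c = tcomp q m h (Phi_pow i) n c"
  proof (cases "n > N")
    case True
    then have "n - (N - D) > D" using \<open>D \<le> N\<close> by auto
    then show ?thesis using tc f_above[OF True] Phi_pow_i_above Q_def q_pos by (simp add: zero_power)
  next
    case False
    then have n: "n = N" "n - (N - D) = D" using \<open>n \<ge> N\<close> \<open>D \<le> N\<close> by auto
    show ?thesis
    proof (cases "c < m")
      case False
      then show ?thesis using tc f_outside Phi_pow_outside q_pos Q_def by (simp add: zero_power)
    next
      case True
      have "(\<Sum>l<m. w l * Phi_pow i D l c ^ Q) = (\<Sum>k<m. \<Sum>l<m. f N k * (Linv k l * Phi_pow i D l c) ^ Q)"
        unfolding w_def by (subst sum.swap) (simp add: sum_distrib_right power_mult_distrib mult.assoc)
      also have "\<dots> = (\<Sum>k<m. f N k * (\<Sum>l<m. Linv k l * Phi_pow i D l c) ^ Q)"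
        by (simp only: sum_distrib_left frobenius_sum[OF char_power] Q_def)
      also have "\<dots> = (\<Sum>k<m. if k = c then f N c else 0)"
        using True q_pos by (intro sum.cong refl) (auto simp: Linv_left_inverse Q_def zero_power)
      finally show ?thesis using tc n True by simp
    qed
  qed
qed

lemma Hom_subset_FT_span: "Hom F m \<subseteq> FT_span (unit_vec ` ({..<D} \<times> {..<m}))"
proof -
  let ?span = "FT_span (unit_vec ` ({..<D} \<times> {..<m}))"
  have "f \<in> ?span" if "f \<in> Hom F m" "\<And>n c. n \<ge> N \<Longrightarrow> f n c = 0" for N f
    using that
  proof (induct N arbitrary: f rule: less_induct)
    case (less N)
    show ?case
    proof (cases "N \<le> D")
      case True
      then show ?thesis using Hom_low_degree_in_FT_span less.prems by simp
    next
      case False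
      define N' where "N' = N - 1"
      have N': "D \<le> N'" "N' < N" "\<And>n. n > N' \<Longrightarrow> n \<ge> N" using False unfolding N'_def by auto
      obtain h where h: "h \<in> Hom F m" "\<And>n c. n > N' - D \<Longrightarrow> h n c = 0"
        and f_top: "\<And>n c. n \<ge> N' \<Longrightarrow> f n c = tcomp q m h (Phi_pow i) n c"
        using division_step[OF less.prems(1) N'(1)] N'(3) less.prems(2) by blast
      have "Suc (N' - D) < N" using N' D_pos by simp
      then have "h \<in> ?span" using less.hyps h by simp
      then have h_span: "tcomp q m h (Phi_pow i) \<in> ?span" by (rule FT_span_tcomp_Phi_pow)
      define r where "r n c = f n c - tcomp q m h (Phi_pow i) n c" for n c
      have "r \<in> Hom F m" unfolding r_def by (intro Hom_diff less.prems(1) tcomp_Phi_pow_in_Hom h(1))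
      moreover have "\<And>n c. n \<ge> N' \<Longrightarrow> r n c = 0" by (simp add: r_def f_top)
      ultimately have "r \<in> ?span" using less.hyps[OF N'(2)] by blast
      then have "(\<lambda>n c. r n c + tcomp q m h (Phi_pow i) n c) \<in> ?span"
        using h_span by (rule FT_span_add)
      then show ?thesis by (simp add: r_def)
    qed
  qed
  moreover have "\<exists>N. \<forall>n c. n \<ge> N \<longrightarrow> f n c = 0" if f: "f \<in> Hom F m" for f
  proof -
    obtain D' where "\<forall>n > D'. \<forall>c. f n c = 0" using f unfolding Hom_def by blast
    then show ?thesis by (intro exI[of _ "Suc D'"]) auto
  qed
  ultimately show ?thesis by blast
qed
end

section \<open>Torsion when a power of Phi(T) is constant\<close>

definition vec_mat_mult :: "nat \<Rightarrow> (nat \<Rightarrow> 'a::comm_ring_1) \<Rightarrow> (nat \<Rightarrow> nat \<Rightarrow> 'a) \<Rightarrow> nat \<Rightarrow> 'a" where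
  "vec_mat_mult m v M = (\<lambda>c. \<Sum>l<m. v l * M l c)"

fun vec_mat_pow :: "nat \<Rightarrow> (nat \<Rightarrow> nat \<Rightarrow> 'a::comm_ring_1) \<Rightarrow> nat \<Rightarrow> (nat \<Rightarrow> 'a) \<Rightarrow> nat \<Rightarrow> 'a" where
  "vec_mat_pow m M 0 v = v"
| "vec_mat_pow m M (Suc k) v = vec_mat_pow m M k (vec_mat_mult m v M)"

definition poly_act :: "nat \<Rightarrow> (nat \<Rightarrow> nat \<Rightarrow> 'a::comm_ring_1) \<Rightarrow> 'a poly \<Rightarrow> (nat \<Rightarrow> 'a) \<Rightarrow> nat \<Rightarrow> 'a" where
  "poly_act m M p v = (\<lambda>c. \<Sum>k\<le>degree p. coeff p k * vec_mat_pow m M k v c)"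

definition mat_frob :: "nat \<Rightarrow> (nat \<Rightarrow> nat \<Rightarrow> 'a::comm_ring_1) \<Rightarrow> nat \<Rightarrow> nat \<Rightarrow> 'a" where
  "mat_frob Q B = (\<lambda>r c. B r c ^ Q)"

lemma vec_mat_mult_smult: "vec_mat_mult m (\<lambda>c. x * v c) M = (\<lambda>c. x * vec_mat_mult m v M c)"
  unfolding vec_mat_mult_def by (simp add: sum_distrib_left mult.assoc)

lemma vec_mat_mult_sum:
  "vec_mat_mult m (\<lambda>c. \<Sum>s\<in>S. v s c) M = (\<lambda>c. \<Sum>s\<in>S. vec_mat_mult m (v s) M c)"
  unfolding vec_mat_mult_def by (intro ext) (simp add: sum_distrib_right sum.swap[of _ S])

lemma vec_mat_pow_smult: "vec_mat_pow m M k (\<lambda>c. x * v c) = (\<lambda>c. x * vec_mat_pow m M k v c)"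
  by (induct k arbitrary: v) (simp_all add: vec_mat_mult_smult)

lemma vec_mat_pow_zero: "vec_mat_pow m M k (\<lambda>c. 0) = (\<lambda>c. 0)"
  using vec_mat_pow_smult[of m M k 0] by simp

lemma vec_mat_pow_vec_mat_mult:
  "vec_mat_pow m M k (vec_mat_mult m v M) = vec_mat_mult m (vec_mat_pow m M k v) M"
  by (induct k arbitrary: v) simp_all

lemma poly_act_eq_sum_lessThan:
  "degree p < K \<Longrightarrow> poly_act m M p v c = (\<Sum>k<K. coeff p k * vec_mat_pow m M k v c)"
  unfolding poly_act_def by (rule sum.mono_neutral_left) (auto simp: coeff_eq_0)

lemma poly_act_add: "poly_act m M (p + p') v = (\<lambda>c. poly_act m M p v c + poly_act m M p' v c)"
proof (intro ext)
  fix c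
  define K where "K = Suc (max (degree p) (degree p'))"
  have "degree (p + p') < K" unfolding K_def using degree_add_le_max[of p p'] by auto
  then show "poly_act m M (p + p') v c = poly_act m M p v c + poly_act m M p' v c"
    by (simp add: poly_act_eq_sum_lessThan[where K = K] K_def sum.distrib distrib_right)
qed

lemma poly_act_smult: "poly_act m M (Polynomial.smult x p) v = (\<lambda>c. x * poly_act m M p v c)"
proof (intro ext)
  fix c
  have "degree (Polynomial.smult x p) < Suc (degree p)" using degree_smult_le[of x p] by simp
  then show "poly_act m M (Polynomial.smult x p) v c = x * poly_act m M p v c"
    by (simp add: poly_act_eq_sum_lessThan[where K = "Suc (degree p)"] sum_distrib_left distrib_left
        mult.assoc)
qed

lemma poly_act_one: "poly_act m M 1 v = v"
  unfolding poly_act_def by simp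

lemma poly_act_zero_vec: "poly_act m M p (\<lambda>c. 0) = (\<lambda>c. 0)"
  unfolding poly_act_def by (simp add: vec_mat_pow_zero)

lemma poly_act_vec_mat_mult:
  "poly_act m M p (vec_mat_mult m v M) = vec_mat_mult m (poly_act m M p v) M"
  unfolding poly_act_def
  by (intro ext) (simp add: vec_mat_pow_vec_mat_mult vec_mat_mult_sum vec_mat_mult_smult)

lemma poly_act_pCons:
  "poly_act m M (pCons x p) v = (\<lambda>c. x * v c + poly_act m M p (vec_mat_mult m v M) c)"
proof (intro ext)
  fix c
  define K where "K = Suc (degree p)"
  have d1: "degree (pCons x p) < Suc K" and d2: "degree p < K"
    unfolding K_def using degree_pCons_le[of x p] by auto
  show "poly_act m M (pCons x p) v c = x * v c + poly_act m M p (vec_mat_mult m v M) c"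
    unfolding poly_act_eq_sum_lessThan[OF d1] poly_act_eq_sum_lessThan[OF d2] sum.lessThan_Suc_shift
    by simp
qed

lemma poly_act_mult: "poly_act m M (p * p') v = poly_act m M p (poly_act m M p' v)"
proof (induct p arbitrary: v rule: pCons_induct)
  case 0
  then show ?case by (simp add: poly_act_def)
next
  case (pCons x p)
  have "poly_act m M (pCons x p * p') v = poly_act m M (Polynomial.smult x p' + pCons 0 (p * p')) v" by simp
  also have "\<dots> = (\<lambda>c. x * poly_act m M p' v c + poly_act m M p (poly_act m M p' (vec_mat_mult m v M)) c)"
    by (simp add: poly_act_add poly_act_smult poly_act_pCons pCons)
  also have "\<dots> = poly_act m M (pCons x p) (poly_act m M p' v)"
    by (simp add: poly_act_pCons poly_act_vec_mat_mult)
  finally show ?case .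
qed

lemma mat_pow_outside: "c \<ge> m \<Longrightarrow> mat_pow m B k l c = 0"
  by (induct k arbitrary: l) (simp_all add: mat_id_def mat_mult_def)

lemma vec_mat_pow_outside:
  assumes "\<And>r c. r \<ge> m \<or> c \<ge> m \<Longrightarrow> B r c = 0" "\<And>c. c \<ge> m \<Longrightarrow> v c = 0" "c \<ge> m"
  shows "vec_mat_pow m B k v c = 0"
  using assms(2,3)
proof (induct k arbitrary: v)
  case (Suc k)
  have "\<And>c. c \<ge> m \<Longrightarrow> vec_mat_mult m v B c = 0" using assms(1) by (simp add: vec_mat_mult_def)
  then show ?case using Suc by simp
qed simp

lemma poly_act_outside:
  assumes "\<And>r c. r \<ge> m \<or> c \<ge> m \<Longrightarrow> B r c = 0" "\<And>c. c \<ge> m \<Longrightarrow> v c = 0" "c \<ge> m"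
  shows "poly_act m B p v c = 0"
  unfolding poly_act_def using vec_mat_pow_outside[OF assms] by simp

lemma mat_frob_outside:
  "(\<And>r c. r \<ge> m \<or> c \<ge> m \<Longrightarrow> B r c = 0) \<Longrightarrow> Q > 0 \<Longrightarrow> r \<ge> m \<or> c \<ge> m \<Longrightarrow> mat_frob Q B r c = 0"
  unfolding mat_frob_def by (simp add: zero_power)

lemma vec_mat_pow_mat_frob:
  fixes B :: "nat \<Rightarrow> nat \<Rightarrow> 'a::comm_ring_1"
  assumes q: "char_power TYPE('a) q"
    and B_outside: "\<And>r c. r \<ge> m \<or> c \<ge> m \<Longrightarrow> B r c = 0"
    and v_outside: "\<And>c. c \<ge> m \<Longrightarrow> v c = 0"
  shows "(\<Sum>l<m. v l * mat_pow m B k l c ^ q ^ n) = vec_mat_pow m (mat_frob (q ^ n) B) k v c"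
  using v_outside
proof (induct k arbitrary: v c)
  case 0
  have "(\<Sum>l<m. v l * mat_id m l c ^ q ^ n) = (\<Sum>l<m. if l = c then v c else 0)"
    using char_power_pos[OF q] by (intro sum.cong refl) (auto simp: mat_id_def zero_power)
  then show ?case using 0 by (cases "c < m") auto
next
  case (Suc k)
  let ?w = "vec_mat_mult m v (mat_frob (q ^ n) B)"
  have "\<And>c. c \<ge> m \<Longrightarrow> ?w c = 0"
    using B_outside char_power_pos[OF q] by (auto simp: vec_mat_mult_def mat_frob_def zero_power)
  note IH = Suc.hyps[OF this]
  have "(\<Sum>l<m. v l * mat_pow m B (Suc k) l c ^ q ^ n)
      = (\<Sum>l<m. \<Sum>j<m. v l * B l j ^ q ^ n * mat_pow m B k j c ^ q ^ n)"
    by (simp add: mat_mult_def frobenius_sum[OF q] power_mult_distrib sum_distrib_left mult.assoc)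
  also have "\<dots> = (\<Sum>j<m. ?w j * mat_pow m B k j c ^ q ^ n)"
    by (subst sum.swap) (simp add: vec_mat_mult_def mat_frob_def sum_distrib_right)
  finally show ?case using IH by simp
qed

definition is_poly_in_X_pow :: "nat \<Rightarrow> 'a::zero poly \<Rightarrow> bool" where
  "is_poly_in_X_pow i a \<longleftrightarrow> (\<forall>k. coeff a k \<noteq> 0 \<longrightarrow> i dvd k)"

lemma is_poly_in_X_pow_mult:
  fixes a b :: "'a::comm_semiring_0 poly"
  assumes a: "is_poly_in_X_pow i a" and b: "is_poly_in_X_pow i b"
  shows "is_poly_in_X_pow i (a * b)"
  unfolding is_poly_in_X_pow_def
proof (intro allI impI)
  fix k assume "coeff (a * b) k \<noteq> 0"
  then obtain j where j: "j \<le> k" "coeff a j * coeff b (k - j) \<noteq> 0"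
    unfolding coeff_mult by (meson atMost_iff sum.neutral)
  then have "i dvd j + (k - j)"
    using a b j(2) unfolding is_poly_in_X_pow_def by (intro dvd_add) (auto dest: mult_not_zero)
  then show "i dvd k" using j by simp
qed

lemma is_poly_in_X_pow_prod:
  fixes f :: "'b \<Rightarrow> 'a::comm_semiring_1 poly"
  shows "(\<And>x. x \<in> S \<Longrightarrow> is_poly_in_X_pow i (f x)) \<Longrightarrow> is_poly_in_X_pow i (prod f S)"
proof (induct S rule: infinite_finite_induct)
  case (insert x S)
  then show ?case by (simp add: is_poly_in_X_pow_mult)
qed (simp_all add: is_poly_in_X_pow_def coeff_1)

lemma is_poly_in_X_pow_power:
  "is_poly_in_X_pow i (a :: 'a::comm_semiring_1 poly) \<Longrightarrow> is_poly_in_X_pow i (a ^ k)"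
  using is_poly_in_X_pow_prod[of "{..<k}" i "\<lambda>_. a"] by simp

lemma is_poly_in_X_pow_monom_minus_const: "is_poly_in_X_pow i (monom 1 i - [:x:])"
  unfolding is_poly_in_X_pow_def by (auto simp: coeff_monom coeff_pCons split: if_splits nat.splits)

lemma monom_minus_const_nonzero: "i > 0 \<Longrightarrow> monom (1::'a::comm_ring_1) i - [:x:] \<noteq> 0"
  by (metis coeff_diff coeff_monom coeff_pCons_Suc coeff_pCons_0 diff_zero gr0_conv_Suc
      one_neq_zero coeff_0)

lemma linear_dvd_monom_minus_power: "[:- c, 1:] dvd (monom (1::'a::comm_ring_1) i - [:c ^ i:])"
  unfolding poly_eq_0_iff_dvd[symmetric] by (simp add: poly_monom)

context T_module
begin

abbreviation Phi0 :: "nat \<Rightarrow> nat \<Rightarrow> 'a" where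
  "Phi0 \<equiv> (\<lambda>r c. Phi 0 r c)"

abbreviation Phi0_nil :: "nat \<Rightarrow> nat \<Rightarrow> 'a" where
  "Phi0_nil \<equiv> (\<lambda>r c. Phi 0 r c - theta * mat_id m r c)"

lemma q_power_pos: "q ^ n > 0"
  using q_pos by simp

lemma Phi0_outside: "r \<ge> m \<or> c \<ge> m \<Longrightarrow> Phi0 r c = 0"
  using Phi_outside by simp

lemma Phi0_nil_outside: "r \<ge> m \<or> c \<ge> m \<Longrightarrow> Phi0_nil r c = 0"
  using Phi_outside by (auto simp: mat_id_def)

lemma Phi_pow_coeff_0: "Phi_pow k 0 r c = mat_pow m Phi0 k r c"
  by (induct k arbitrary: r c) (simp_all add: tone_def mat_id_def tmul_def mat_mult_def)

lemma tcomp_const: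
  assumes "\<And>n r c. n > 0 \<Longrightarrow> M n r c = 0"
  shows "tcomp q m f M n c = (\<Sum>l<m. f n l * M 0 l c ^ q ^ n)"
proof -
  have "tcomp q m f M n c = (\<Sum>j\<le>n. if j = n then (\<Sum>l<m. f n l * M 0 l c ^ q ^ n) else 0)"
    unfolding tcomp_def using assms q_pos by (intro sum.cong refl) (auto simp: zero_power)
  then show ?thesis by simp
qed

lemma poly_act_linear_factor:
  assumes w_outside: "\<And>c. c \<ge> m \<Longrightarrow> w c = 0"
  shows "poly_act m (mat_frob (q ^ n) Phi0) [:- (theta ^ q ^ n), 1:] w
    = vec_mat_mult m w (mat_frob (q ^ n) Phi0_nil)"
proof (intro ext)
  fix c
  have "(\<Sum>l<m. w l * (theta * mat_id m l c) ^ q ^ n) = theta ^ q ^ n * w c"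
  proof (cases "c < m")
    case True
    then have "(\<Sum>l<m. w l * (theta * mat_id m l c) ^ q ^ n) = (\<Sum>l<m. if l = c then theta ^ q ^ n * w c else 0)"
      using q_pos by (intro sum.cong refl) (auto simp: mat_id_def zero_power)
    then show ?thesis using True by simp
  qed (use w_outside q_pos in \<open>simp add: mat_id_def zero_power\<close>)
  moreover have "vec_mat_mult m w (mat_frob (q ^ n) Phi0) c
      = vec_mat_mult m w (mat_frob (q ^ n) Phi0_nil) c + (\<Sum>l<m. w l * (theta * mat_id m l c) ^ q ^ n)"
  proof -
    have "Phi0 l c ^ q ^ n = Phi0_nil l c ^ q ^ n + (theta * mat_id m l c) ^ q ^ n" for l
      using frobenius_add[OF char_power, of "Phi0_nil l c" "theta * mat_id m l c" n] by simp
    then show ?thesis unfolding vec_mat_mult_def mat_frob_def by (simp add: distrib_left sum.distrib)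
  qed
  ultimately show "poly_act m (mat_frob (q ^ n) Phi0) [:- (theta ^ q ^ n), 1:] w c
      = vec_mat_mult m w (mat_frob (q ^ n) Phi0_nil) c"
    by (simp add: poly_act_pCons poly_act_one[unfolded one_pCons] poly_act_def)
qed

lemma poly_act_linear_factor_power:
  assumes w_outside: "\<And>c. c \<ge> m \<Longrightarrow> w c = 0"
  shows "poly_act m (mat_frob (q ^ n) Phi0) ([:- (theta ^ q ^ n), 1:] ^ K) w
    = vec_mat_pow m (mat_frob (q ^ n) Phi0_nil) K w"
proof (induct K)
  case 0
  then show ?case by (simp add: poly_act_one)
next
  case (Suc K)
  have "\<And>c. c \<ge> m \<Longrightarrow> vec_mat_pow m (mat_frob (q ^ n) Phi0_nil) K w c = 0"
    by (rule vec_mat_pow_outside[OF mat_frob_outside[OF Phi0_nil_outside q_power_pos]])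
       (use w_outside in auto)
  then show ?case
    by (simp only: power_Suc poly_act_mult Suc poly_act_linear_factor vec_mat_pow_vec_mat_mult
        vec_mat_pow.simps)
qed

lemma vec_mat_pow_Phi0_nil_eq_0:
  obtains K where "\<And>(w :: nat \<Rightarrow> 'a) n c. (\<And>c. c \<ge> m \<Longrightarrow> w c = 0) \<Longrightarrow>
    vec_mat_pow m (mat_frob (q ^ n) Phi0_nil) K w c = 0"
proof -
  obtain K where K: "mat_eq m (mat_pow m Phi0_nil K) (\<lambda>_ _. 0)"
    using nilpotent unfolding mat_nilpotent_def by blast
  have "vec_mat_pow m (mat_frob (q ^ n) Phi0_nil) K w c = 0"
    if w_outside: "\<And>c. c \<ge> m \<Longrightarrow> w c = 0" for w :: "nat \<Rightarrow> 'a" and n c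
  proof -
    have "vec_mat_pow m (mat_frob (q ^ n) Phi0_nil) K w c = (\<Sum>l<m. w l * mat_pow m Phi0_nil K l c ^ q ^ n)"
      by (rule vec_mat_pow_mat_frob[OF char_power Phi0_nil_outside w_outside, symmetric])
    also have "\<dots> = 0"
      using K q_pos by (cases "c < m") (auto simp: mat_eq_def mat_pow_outside zero_power)
    finally show ?thesis .
  qed
  then show ?thesis using that by blast
qed
end

locale constant_Phi_pow = T_module +
  fixes i :: nat
  assumes i_pos: "i > 0" and Phi_pow_i_const: "\<And>n r c. n > 0 \<Longrightarrow> Phi_pow i n r c = 0"
begin

lemma Phi_pow_mult_const: "n > 0 \<Longrightarrow> Phi_pow (i * t) n r c = 0"
proof (induct t arbitrary: n r c)
  case (Suc t)
  have "tmul q m (Phi_pow (i * t)) (Phi_pow i) n r c = 0"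
    by (rule tmul_eq_0_above_degree[where a = 0 and b = 0]) (use Suc Phi_pow_i_const q_pos in auto)
  then show ?case by (simp add: Phi_pow_add[symmetric] add.commute)
qed (simp add: tone_def)

lemma FT_act_poly_in_X_pow:
  assumes a: "is_poly_in_X_pow i a" and f: "f \<in> Hom F m"
  shows "FT_act q m Phi a f n c = poly_act m (mat_frob (q ^ n) Phi0) a (f n) c"
  unfolding FT_act_def poly_act_def
proof (intro sum.cong refl)
  fix k
  show "coeff a k * tcomp q m f (Phi_pow k) n c = coeff a k * vec_mat_pow m (mat_frob (q ^ n) Phi0) k (f n) c"
  proof (cases "coeff a k = 0")
    case False
    then obtain t where t: "k = i * t" using a unfolding is_poly_in_X_pow_def by blast
    have "tcomp q m f (Phi_pow k) n c = (\<Sum>l<m. f n l * mat_pow m Phi0 k l c ^ q ^ n)"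
      by (simp add: tcomp_const t Phi_pow_mult_const Phi_pow_coeff_0)
    also have "\<dots> = vec_mat_pow m (mat_frob (q ^ n) Phi0) k (f n) c"
      by (rule vec_mat_pow_mat_frob[OF char_power Phi0_outside]) (use f in \<open>auto simp: Hom_def\<close>)
    finally show ?thesis by simp
  qed simp
qed

lemma Hom_torsion:
  assumes f: "f \<in> Hom F m"
  shows "\<exists>a\<in>FT F. a \<noteq> 0 \<and> FT_act q m Phi a f = (\<lambda>n c. 0)"
proof -
  obtain K where K: "\<And>(w :: nat \<Rightarrow> 'a) n c. (\<And>c. c \<ge> m \<Longrightarrow> w c = 0) \<Longrightarrow> vec_mat_pow m (mat_frob (q ^ n) Phi0_nil) K w c = 0"
    using vec_mat_pow_Phi0_nil_eq_0 by blast
  obtain N0 where N0: "\<And>n c. n > N0 \<Longrightarrow> f n c = 0" and f_outside: "\<And>n c. c \<ge> m \<Longrightarrow> f n c = 0"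
    using f unfolding Hom_def by blast
  define th where "th n = theta ^ q ^ n" for n
  define a where "a = (\<Prod>n\<le>N0. (monom 1 i - [:th n ^ i:]) ^ K)"
  have "a \<in> FT F" unfolding a_def th_def
    by (intro FT_prod FT_power FT_monom_minus_const F_power theta_in_F)
  moreover have "a \<noteq> 0" unfolding a_def using monom_minus_const_nonzero[OF i_pos] by simp blast
  moreover have "FT_act q m Phi a f n c = 0" for n c
  proof -
    let ?B = "mat_frob (q ^ n) Phi0"
    have "is_poly_in_X_pow i a" unfolding a_def
      by (intro is_poly_in_X_pow_prod is_poly_in_X_pow_power is_poly_in_X_pow_monom_minus_const)
    then have "FT_act q m Phi a f n c = poly_act m ?B a (f n) c"
      by (rule FT_act_poly_in_X_pow[OF _ f])
    also have "\<dots> = 0"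
    proof (cases "n \<le> N0")
      case False
      then have "f n = (\<lambda>c. 0)" using N0 by auto
      then show ?thesis by (simp add: poly_act_zero_vec)
    next
      case True
      have "[:- th n, 1:] ^ K dvd (monom 1 i - [:th n ^ i:]) ^ K"
        by (rule dvd_power_same[OF linear_dvd_monom_minus_power])
      also have "(monom 1 i - [:th n ^ i:]) ^ K dvd a"
        unfolding a_def using True by (intro dvd_prodI) auto
      finally obtain b where b: "a = [:- th n, 1:] ^ K * b" by (elim dvdE)
      have b_outside: "\<And>c. c \<ge> m \<Longrightarrow> poly_act m ?B b (f n) c = 0"
        by (rule poly_act_outside[OF mat_frob_outside[OF Phi0_outside q_power_pos]]) (auto simp: f_outside)
      have "poly_act m ?B a (f n) c = poly_act m ?B ([:- th n, 1:] ^ K) (poly_act m ?B b (f n)) c"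
        by (simp add: b poly_act_mult)
      also have "\<dots> = vec_mat_pow m (mat_frob (q ^ n) Phi0_nil) K (poly_act m ?B b (f n)) c"
        unfolding th_def by (simp add: poly_act_linear_factor_power[OF b_outside])
      also have "\<dots> = 0" by (rule K[OF b_outside])
      finally show ?thesis .
    qed
    finally show ?thesis .
  qed
  ultimately show ?thesis by blast
qed

end

lemma (in T_module) finite_rank_if_leading_coeff_invertible:
  assumes "i > 0" and invertible: "mat_invertible m (tlead m (Phi_pow i))"
  shows "finite_rank q F m Phi"
proof (cases "tdeg m (Phi_pow i) = 0")
  case True
  interpret constant_Phi_pow F q m d theta Phi i
    using assms(1) True Phi_pow_above_tdeg by unfold_locales auto
  show ?thesis using Hom_torsion by (rule finite_rank_if_torsion)
next
  case False
  obtain Linv where "\<And>r c. Linv r c \<in> F" "\<And>k c. k < m \<Longrightarrow> c < m \<Longrightarrow>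
      (\<Sum>l<m. Linv k l * tlead m (Phi_pow i) l c) = (if k = c then 1 else 0)"
    using F_left_inverse[OF invertible] unfolding tlead_def using Phi_pow_in_F by blast
  then interpret invertible_leading_coeff F q m d theta Phi i "tdeg m (Phi_pow i)" Linv
    using False Phi_pow_above_tdeg by unfold_locales (auto simp: tlead_def)
  show ?thesis
    by (rule finite_rank_if_Hom_subset_FT_span[OF _ _ Hom_subset_FT_span]) (auto intro: unit_vec_in_Hom)
qed

lemma char_power_if_good_setting: "good_setting q (theta :: 'a::field) \<Longrightarrow> char_power TYPE('a) q"
  unfolding good_setting_def char_power_def by blast

lemma theta_in_kfield:
  assumes "q > 0"
  shows "theta \<in> kfield q theta"
proof -
  have "coeff [:0, 1:] k \<in> Fq q" "coeff 1 k \<in> Fq q" for k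
    using assms by (auto simp: Fq_def coeff_pCons coeff_1 zero_power split: nat.splits)
  moreover have "theta = poly [:0, 1:] theta / poly 1 theta" by simp
  ultimately show ?thesis unfolding kfield_def by fastforce
qed

theorem theorem9:
  fixes q m :: nat and theta :: "'a::field" and F :: "'a set"
    and Phi_T :: "nat \<Rightarrow> nat \<Rightarrow> nat \<Rightarrow> 'a"
  assumes "good_setting q theta"
    and "intermediate_field q theta F"
    and "is_T_module q theta F m Phi_T"
    and "\<exists>i>0. mat_invertible m (tlead m (tpow q m Phi_T i))"
  shows "abelian q F m Phi_T"
proof -
  have q: "char_power TYPE('a) q" using assms(1) by (rule char_power_if_good_setting)
  have "theta \<in> F"
    using assms(2) theta_in_kfield[OF char_power_pos[OF q]] unfolding intermediate_field_def by blast
  moreover obtain d where "\<And>n r c. n > d \<Longrightarrow> Phi_T n r c = 0"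
    using assms(3) unfolding is_T_module_def by (metis not_le)
  ultimately interpret T_module F q m d theta Phi_T
    using q assms(2,3) unfolding intermediate_field_def is_T_module_def by unfold_locales auto
  show ?thesis
    unfolding abelian_def using assms(4) finite_rank_if_leading_coeff_invertible by blast
qed

end
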